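(* Let $G$ be a homogeneous complete $k$-partite graph, with vertices $t_1,\dots,t_s$. The following are equivalent: (a) the graph $\mathcal{G}_{I_c(G)}$ of $I_c(G)$ is a complete graph; (b) $G$ is a complete graph; (c) ${\rm v}(I_c(G))=\alpha_0(G)-1$.
   Context: $G$ is a homogeneous complete $k$-partite graph if $G=G_1*\cdots*G_k$, $k\ge2$, is the join of pairwise vertex-disjoint graphs without edges each having the same number $p$ of vertices (the join contains all edges between vertices of distinct $G_i$). Such a $G$ is unmixed (all minimal vertex covers have the same size). $\alpha_0(G)$ is the minimum size of a vertex cover. $I_c(G)\subset S=K[t_1,\ldots,t_s]$ ($K$ a field) is generated by $\prod_{t_i\in C}t_i$ over minimal vertex covers $C$. For unmixed $G$ with minimal vertex covers $C_1,\ldots,C_r$, the graph $\mathcal{G}_{I_c(G)}$ has vertex set $\{C_1,\ldots,C_r\}$ and $\{C_i,C_j\}$ ($i\neq j$) is an edge iff $|C_i\cup C_j|=|C_i|+1$. For a graded ideal $I\subset S$, ${\rm v}(I)=\min\{d\ge0:\exists f\in S_d,\ \exists\mathfrak p\in{\rm Ass}(I),\ (I\colon f)=\mathfrak p\}$. *)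

theory Defs
  imports Main "HOL-Library.Poly_Mapping"
begin

type_synonym ('v, 'k) mpoly = "('v \<Rightarrow>\<^sub>0 nat) \<Rightarrow>\<^sub>0 'k"

definition var :: "'v \<Rightarrow> ('v, 'k::comm_ring_1) mpoly" where
  "var v = Poly_Mapping.single (Poly_Mapping.single v 1) 1"

definition mon_deg :: "('v \<Rightarrow>\<^sub>0 nat) \<Rightarrow> nat" where
  "mon_deg m = (\<Sum>v\<in>Poly_Mapping.keys m. Poly_Mapping.lookup m v)"

definition homog_of_deg :: "nat \<Rightarrow> ('v, 'k::comm_ring_1) mpoly set" where
  "homog_of_deg d = {f. \<forall>m\<in>Poly_Mapping.keys f. mon_deg m = d}"

definition is_ideal :: "'a::comm_ring_1 set \<Rightarrow> bool" where
  "is_ideal I \<longleftrightarrow> 0 \<in> I \<and> (\<forall>a\<in>I. \<forall>b\<in>I. a + b \<in> I) \<and> (\<forall>a\<in>I. \<forall>r. r * a \<in> I)"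

definition ideal_gen :: "'a::comm_ring_1 set \<Rightarrow> 'a set" where
  "ideal_gen X = \<Inter>{I. is_ideal I \<and> X \<subseteq> I}"

definition prime_ideal :: "'a::comm_ring_1 set \<Rightarrow> bool" where
  "prime_ideal P \<longleftrightarrow> is_ideal P \<and> 1 \<notin> P \<and> (\<forall>a b. a * b \<in> P \<longrightarrow> a \<in> P \<or> b \<in> P)"

definition colon_ideal :: "'a::comm_ring_1 set \<Rightarrow> 'a \<Rightarrow> 'a set" where
  "colon_ideal I f = {g. g * f \<in> I}"

definition Ass :: "'a::comm_ring_1 set \<Rightarrow> 'a set set" where
  "Ass I = {P. prime_ideal P \<and> (\<exists>f. colon_ideal I f = P)}"

definition v_number :: "('v, 'k::field) mpoly set \<Rightarrow> nat" where
  "v_number I = (LEAST d. \<exists>f\<in>homog_of_deg d. \<exists>P\<in>Ass I. colon_ideal I f = P)"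

text \<open>A graph is given by its edge set E, a set of 2-element vertex sets.\<close>

definition vertex_cover :: "'v set set \<Rightarrow> 'v set \<Rightarrow> bool" where
  "vertex_cover E C \<longleftrightarrow> (\<forall>e\<in>E. e \<inter> C \<noteq> {})"

definition min_vertex_cover :: "'v set set \<Rightarrow> 'v set \<Rightarrow> bool" where
  "min_vertex_cover E C \<longleftrightarrow> vertex_cover E C \<and> (\<forall>D. D \<subset> C \<longrightarrow> \<not> vertex_cover E D)"

definition alpha0 :: "'v set set \<Rightarrow> nat" where
  "alpha0 E = (LEAST n. \<exists>C. vertex_cover E C \<and> card C = n)"

definition cover_ideal :: "'v::finite set set \<Rightarrow> ('v, 'k::field) mpoly set" where
  "cover_ideal E = ideal_gen {(\<Prod>v\<in>C. var v) | C. min_vertex_cover E C}"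

text \<open>The graph G_{I_c(G)} on the minimal vertex covers is complete.\<close>
definition cover_graph_complete :: "'v set set \<Rightarrow> bool" where
  "cover_graph_complete E \<longleftrightarrow>
     (\<forall>C1 C2. min_vertex_cover E C1 \<and> min_vertex_cover E C2 \<and> C1 \<noteq> C2
        \<longrightarrow> card (C1 \<union> C2) = card C1 + 1)"

definition complete_graph :: "'v set set \<Rightarrow> bool" where
  "complete_graph E \<longleftrightarrow> (\<forall>u v. u \<noteq> v \<longrightarrow> {u, v} \<in> E)"

definition homog_complete_multipartite :: "'v set set \<Rightarrow> nat \<Rightarrow> nat \<Rightarrow> bool" where
  "homog_complete_multipartite E k p \<longleftrightarrow> 2 \<le> k \<and>
     (\<exists>P :: 'v \<Rightarrow> nat. (\<forall>v. P v < k) \<and> (\<forall>i<k. card {v. P v = i} = p) \<and>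
        E = {{u, v} | u v. P u \<noteq> P v})"

end

(*
  The minimal vertex covers of G are the complements of its parts, all of size |V| - p, so
  alpha0(G) = |V| - p, and two distinct minimal covers have a union of size |V| - p + 1 exactly
  when p = 1, i.e. exactly when G is complete.

  For the v-number: if a and b lie in different parts, then (I_c : t^(V - {a,b})) = (t_a, t_b),
  a prime ideal, so v(I_c) <= |V| - 2. Conversely, let (I_c : f) be prime with f homogeneous of
  degree d. It contains I_c, so it contains a variable t_j of every generator, and t_j u lies in
  I_c for every monomial u of f; hence d + 1 >= |V| - p. In the case of equality t_j u and
  t_j' u are both generators for some j, j' in different parts, which is impossible once the
  parts have at least two vertices. So v(I_c) = |V| - 2 = alpha0 - 1 if p = 1, and
  v(I_c) <> alpha0 - 1 if p >= 2.
*)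
theory Submission
  imports Defs
begin

section \<open>Ideals, colon ideals and the v-number\<close>

lemma is_ideal_ideal_gen: "is_ideal (ideal_gen X)"
  unfolding ideal_gen_def is_ideal_def by auto

lemma ideal_gen_superset: "X \<subseteq> ideal_gen X"
  unfolding ideal_gen_def by auto

lemma ideal_gen_least: "is_ideal J \<Longrightarrow> X \<subseteq> J \<Longrightarrow> ideal_gen X \<subseteq> J"
  unfolding ideal_gen_def by auto

lemma ideal_mult_right: "is_ideal I \<Longrightarrow> a \<in> I \<Longrightarrow> a * r \<in> I"
  unfolding is_ideal_def by (metis mult.commute)

lemma ideal_mult_left: "is_ideal I \<Longrightarrow> a \<in> I \<Longrightarrow> r * a \<in> I"
  unfolding is_ideal_def by blast

lemma ideal_diff: "is_ideal I \<Longrightarrow> a \<in> I \<Longrightarrow> b \<in> I \<Longrightarrow> a - b \<in> I"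
  unfolding is_ideal_def by (metis diff_conv_add_uminus mult_minus1)

lemma ideal_sum:
  assumes "is_ideal I" "finite A" "\<And>x. x \<in> A \<Longrightarrow> f x \<in> I"
  shows "sum f A \<in> I"
  using assms(2,3) by (induction A rule: finite_induct) (use assms(1) in \<open>auto simp: is_ideal_def\<close>)

lemma prime_ideal_prod:
  assumes "prime_ideal P" "finite C" "(\<Prod>v\<in>C. x v) \<in> P"
  shows "\<exists>v\<in>C. x v \<in> P"
  using assms(2,3)
proof (induction C rule: finite_induct)
  case empty
  then show ?case using assms(1) by (simp add: prime_ideal_def)
next
  case (insert a F)
  then show ?case using assms(1) unfolding prime_ideal_def by auto
qed

lemma ideal_subset_colon_ideal: "is_ideal I \<Longrightarrow> I \<subseteq> colon_ideal I f"
  unfolding colon_ideal_def using ideal_mult_right by blast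

lemma nonzero_if_prime_colon_ideal: "is_ideal I \<Longrightarrow> prime_ideal (colon_ideal I f) \<Longrightarrow> f \<noteq> 0"
  unfolding prime_ideal_def colon_ideal_def is_ideal_def by auto

lemma colon_ideal_in_Ass: "prime_ideal (colon_ideal I f) \<Longrightarrow> colon_ideal I f \<in> Ass I"
  unfolding Ass_def by blast

lemma v_number_le:
  assumes "f \<in> homog_of_deg d" "prime_ideal (colon_ideal I f)"
  shows "v_number I \<le> d"
  unfolding v_number_def using assms colon_ideal_in_Ass by (intro Least_le) blast

lemma v_number_attained:
  assumes "f \<in> homog_of_deg d" "prime_ideal (colon_ideal I f)"
  shows "\<exists>g\<in>homog_of_deg (v_number I). prime_ideal (colon_ideal I g)"
proof -
  have "\<exists>g\<in>homog_of_deg d. \<exists>P\<in>Ass I. colon_ideal I g = P"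
    using assms colon_ideal_in_Ass by blast
  then have "\<exists>g\<in>homog_of_deg (v_number I). \<exists>P\<in>Ass I. colon_ideal I g = P"
    unfolding v_number_def by (rule LeastI)
  then show ?thesis
    unfolding Ass_def by auto
qed

section \<open>Polynomials: monomial ideals and absence of zero divisors\<close>

lemma is_ideal_monomial_closed:
  fixes \<Phi> :: "'m::comm_monoid_add \<Rightarrow> bool"
  assumes "\<And>x y. \<Phi> y \<Longrightarrow> \<Phi> (x + y)"
  shows "is_ideal {g :: 'm \<Rightarrow>\<^sub>0 'k::comm_ring_1. \<forall>m\<in>Poly_Mapping.keys g. \<Phi> m}"
    (is "is_ideal ?S")
proof -
  have "a + b \<in> ?S" if "a \<in> ?S" "b \<in> ?S" for a b
    using that keys_add[of a b] by blast
  moreover have "r * a \<in> ?S" if a: "a \<in> ?S" for a r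
  proof -
    have "\<Phi> m" if "m \<in> Poly_Mapping.keys (r * a)" for m
    proof -
      obtain x y where "y \<in> Poly_Mapping.keys a" "m = x + y"
        using keys_mult[of r a] \<open>m \<in> _\<close> by blast
      then show ?thesis
        using a assms by blast
    qed
    then show ?thesis by blast
  qed
  moreover have "0 \<in> ?S" by simp
  ultimately show ?thesis
    unfolding is_ideal_def by blast
qed

lemma poly_mapping_sum_single_lookup:
  "g = (\<Sum>m\<in>Poly_Mapping.keys g. Poly_Mapping.single m (Poly_Mapping.lookup g m))"
  by (rule poly_mapping_eqI) (simp add: lookup_sum lookup_single when_def in_keys_iff)

lemma lookup_single_one_mult:
  fixes g :: "'m::cancel_comm_monoid_add \<Rightarrow>\<^sub>0 'k::comm_ring_1"
  shows "Poly_Mapping.lookup (Poly_Mapping.single \<mu> 1 * g) (\<mu> + m) = Poly_Mapping.lookup g m"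
proof -
  have "Poly_Mapping.lookup (Poly_Mapping.single \<mu> 1 * g) (\<mu> + m)
      = (\<Sum>l. (\<Sum>q. Poly_Mapping.lookup g q when \<mu> + m = l + q) when \<mu> = l)"
    unfolding lookup_mult lookup_single by (rule Sum_any.cong) (simp add: when_def)
  also have "\<dots> = (\<Sum>q. Poly_Mapping.lookup g q when \<mu> + m = \<mu> + q)"
    by (simp only: Sum_any_when_equal')
  also have "\<dots> = (\<Sum>q. Poly_Mapping.lookup g q when q = m)"
    by (rule Sum_any.cong) (auto simp: when_def)
  finally show ?thesis by simp
qed

lemma keys_single_one_mult:
  fixes g :: "'m::cancel_comm_monoid_add \<Rightarrow>\<^sub>0 'k::comm_ring_1"
  shows "Poly_Mapping.keys (Poly_Mapping.single \<mu> 1 * g) = (\<lambda>m. \<mu> + m) ` Poly_Mapping.keys g"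
proof
  show "Poly_Mapping.keys (Poly_Mapping.single \<mu> 1 * g) \<subseteq> (\<lambda>m. \<mu> + m) ` Poly_Mapping.keys g"
    using keys_mult[of "Poly_Mapping.single \<mu> (1::'k)" g] by auto
  show "(\<lambda>m. \<mu> + m) ` Poly_Mapping.keys g \<subseteq> Poly_Mapping.keys (Poly_Mapping.single \<mu> 1 * g)"
    by (auto simp: in_keys_iff lookup_single_one_mult)
qed

lemma lookup_mult_unique_sum:
  fixes f g :: "'m::monoid_add \<Rightarrow>\<^sub>0 'k::semiring_0"
  assumes "\<And>x y. x \<in> Poly_Mapping.keys f \<Longrightarrow> y \<in> Poly_Mapping.keys g \<Longrightarrow> x + y = a + b \<Longrightarrow> x = a \<and> y = b"
  shows "Poly_Mapping.lookup (f * g) (a + b) = Poly_Mapping.lookup f a * Poly_Mapping.lookup g b"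
proof -
  have "Poly_Mapping.lookup f l * (\<Sum>q. Poly_Mapping.lookup g q when a + b = l + q)
      = (Poly_Mapping.lookup f a * Poly_Mapping.lookup g b when l = a)" for l
  proof (cases "Poly_Mapping.lookup f l = 0")
    case False
    have "(Poly_Mapping.lookup g q when a + b = l + q) = (Poly_Mapping.lookup g q when q = b when l = a)" for q
      using assms[of l q] False by (cases "Poly_Mapping.lookup g q = 0") (auto simp: in_keys_iff when_def)
    then have "(\<Sum>q. Poly_Mapping.lookup g q when a + b = l + q) = (Poly_Mapping.lookup g b when l = a)"
      by (simp only: Sum_any_when_independent Sum_any_when_equal)
    then show ?thesis
      by (simp add: when_def)
  qed (auto simp: when_def)
  then show ?thesis
    by (simp add: lookup_mult)
qed

lemma mult_neq_zero_if_order_embedding: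
  fixes \<phi> :: "'m::monoid_add \<Rightarrow> 'l::{ordered_cancel_comm_monoid_add, linorder}"
    and f g :: "'m \<Rightarrow>\<^sub>0 'k::{semiring_0, semiring_no_zero_divisors}"
  assumes inj: "inj \<phi>" and add: "\<And>x y. \<phi> (x + y) = \<phi> x + \<phi> y"
    and "f \<noteq> 0" "g \<noteq> 0"
  shows "f * g \<noteq> 0"
proof -
  have greatest: "\<exists>a\<in>Poly_Mapping.keys h. \<forall>x\<in>Poly_Mapping.keys h. \<phi> x \<le> \<phi> a"
    if "h \<noteq> 0" for h :: "'m \<Rightarrow>\<^sub>0 'k"
  proof -
    have fin: "finite (\<phi> ` Poly_Mapping.keys h)"
      by simp
    have "\<phi> ` Poly_Mapping.keys h \<noteq> {}"
      using that by simp
    then obtain a where a: "a \<in> Poly_Mapping.keys h" "\<phi> a = Max (\<phi> ` Poly_Mapping.keys h)"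
      using Max_in[OF fin] by (metis imageE)
    have "\<phi> x \<le> \<phi> a" if "x \<in> Poly_Mapping.keys h" for x
      unfolding a(2) using fin that by simp
    with a(1) show ?thesis by blast
  qed
  obtain a where a: "a \<in> Poly_Mapping.keys f" "\<And>x. x \<in> Poly_Mapping.keys f \<Longrightarrow> \<phi> x \<le> \<phi> a"
    using greatest \<open>f \<noteq> 0\<close> by blast
  obtain b where b: "b \<in> Poly_Mapping.keys g" "\<And>y. y \<in> Poly_Mapping.keys g \<Longrightarrow> \<phi> y \<le> \<phi> b"
    using greatest \<open>g \<noteq> 0\<close> by blast
  have "x = a \<and> y = b"
    if "x \<in> Poly_Mapping.keys f" "y \<in> Poly_Mapping.keys g" "x + y = a + b" for x y
  proof -
    have sum: "\<phi> x + \<phi> y = \<phi> a + \<phi> b"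
      using that(3) add by metis
    have "\<phi> x \<le> \<phi> a" "\<phi> y \<le> \<phi> b"
      using that a(2) b(2) by auto
    have "\<phi> x = \<phi> a"
    proof (rule ccontr)
      assume "\<phi> x \<noteq> \<phi> a"
      with \<open>\<phi> x \<le> \<phi> a\<close> have "\<phi> x < \<phi> a" by simp
      then have "\<phi> x + \<phi> y < \<phi> a + \<phi> b"
        using \<open>\<phi> y \<le> \<phi> b\<close> by (rule add_less_le_mono)
      with sum show False by simp
    qed
    with sum have "\<phi> y = \<phi> b" by simp
    with \<open>\<phi> x = \<phi> a\<close> show ?thesis
      using inj by (simp add: inj_eq)
  qed
  then have "Poly_Mapping.lookup (f * g) (a + b) = Poly_Mapping.lookup f a * Poly_Mapping.lookup g b"
    by (rule lookup_mult_unique_sum)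
  also have "\<dots> \<noteq> 0"
    using a(1) b(1) by (simp add: in_keys_iff)
  finally show ?thesis by auto
qed

text \<open>The vertex type carries no linear order, so the library's integral domain instance
  for \<open>\<Rightarrow>\<^sub>0\<close> (which needs linearly ordered monomials) does not apply directly;
  instead the monomials are embedded into \<open>nat \<Rightarrow>\<^sub>0 nat\<close>.\<close>

lemma monomial_order_embedding:
  "\<exists>\<phi> :: ('v::finite \<Rightarrow>\<^sub>0 nat) \<Rightarrow> (nat \<Rightarrow>\<^sub>0 nat). inj \<phi> \<and> (\<forall>x y. \<phi> (x + y) = \<phi> x + \<phi> y)"
proof -
  obtain xs :: "'v list" where xs: "set xs = UNIV"
    using finite_list[OF finite_UNIV] by blast
  define \<phi> where "\<phi> m = Poly_Mapping.nth (map (Poly_Mapping.lookup m) xs)" for m :: "'v \<Rightarrow>\<^sub>0 nat"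
  have lookup_\<phi>: "Poly_Mapping.lookup (\<phi> m) i = (if i < length xs then Poly_Mapping.lookup m (xs ! i) else 0)" for m i
    by (simp add: \<phi>_def nth_default_def)
  have "inj \<phi>"
  proof (rule injI, rule poly_mapping_eqI)
    fix x y v
    assume "\<phi> x = \<phi> y"
    obtain i where "i < length xs" "xs ! i = v"
      using xs by (metis UNIV_I in_set_conv_nth)
    then show "Poly_Mapping.lookup x v = Poly_Mapping.lookup y v"
      using lookup_\<phi>[of x i] lookup_\<phi>[of y i] \<open>\<phi> x = \<phi> y\<close> by simp
  qed
  moreover have "\<phi> (x + y) = \<phi> x + \<phi> y" for x y
    by (rule poly_mapping_eqI) (simp add: lookup_\<phi> lookup_add)
  ultimately show ?thesis by blast
qed

lemma mpoly_mult_neq_zero: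
  fixes f g :: "('v::finite, 'k::idom) mpoly"
  assumes "f \<noteq> 0" "g \<noteq> 0"
  shows "f * g \<noteq> 0"
proof -
  obtain \<phi> :: "('v \<Rightarrow>\<^sub>0 nat) \<Rightarrow> (nat \<Rightarrow>\<^sub>0 nat)" where "inj \<phi>" "\<And>x y. \<phi> (x + y) = \<phi> x + \<phi> y"
    using monomial_order_embedding by blast
  then show ?thesis
    using assms by (rule mult_neq_zero_if_order_embedding)
qed

text \<open>The ideal generated by the variables \<open>t\<^sub>a\<close>, \<open>a \<in> A\<close>, described through its monomials.\<close>
definition var_ideal :: "'v set \<Rightarrow> ('v, 'k::comm_ring_1) mpoly set" where
  "var_ideal A = {g. \<forall>m\<in>Poly_Mapping.keys g. \<exists>a\<in>A. 0 < Poly_Mapping.lookup m a}"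

lemma is_ideal_var_ideal: "is_ideal (var_ideal A)"
  unfolding var_ideal_def by (rule is_ideal_monomial_closed) (auto simp: lookup_add)

lemma prime_ideal_var_ideal:
  assumes "A \<noteq> {}"
  shows "prime_ideal (var_ideal A :: ('v::finite, 'k::idom) mpoly set)"
proof -
  let ?Q = "var_ideal A :: ('v, 'k) mpoly set"
  let ?avoids = "\<lambda>m::'v \<Rightarrow>\<^sub>0 nat. \<forall>a\<in>A. Poly_Mapping.lookup m a = 0"
  define proj where
    "proj g = Abs_poly_mapping (\<lambda>m. if ?avoids m then Poly_Mapping.lookup g m else 0)" for g :: "('v, 'k) mpoly"
  have lookup_proj: "Poly_Mapping.lookup (proj g) m = (if ?avoids m then Poly_Mapping.lookup g m else 0)" for g m
  proof -
    have "finite {m. (if ?avoids m then Poly_Mapping.lookup g m else 0) \<noteq> 0}"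
      by (rule finite_subset[of _ "Poly_Mapping.keys g"]) (auto simp: in_keys_iff)
    then show ?thesis
      unfolding proj_def by simp
  qed
  have rest_in: "g - proj g \<in> ?Q" for g
    unfolding var_ideal_def by (auto simp: in_keys_iff lookup_minus lookup_proj split: if_splits)
  have proj_nonzero: "proj g \<noteq> 0" if g: "g \<notin> ?Q" for g
  proof -
    obtain m where "m \<in> Poly_Mapping.keys g" "?avoids m"
      using g unfolding var_ideal_def by auto
    then have "Poly_Mapping.lookup (proj g) m \<noteq> 0"
      by (simp add: lookup_proj in_keys_iff)
    then show ?thesis by auto
  qed
  have keys_proj_mult: "?avoids m" if m: "m \<in> Poly_Mapping.keys (proj g * proj h)" for g h m
  proof -
    obtain x y where "x \<in> Poly_Mapping.keys (proj g)" "y \<in> Poly_Mapping.keys (proj h)" "m = x + y"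
      using m keys_mult by blast
    then show ?thesis
      by (auto simp: in_keys_iff lookup_proj lookup_add split: if_splits)
  qed
  have "g \<in> ?Q \<or> h \<in> ?Q" if "g * h \<in> ?Q" for g h
  proof (rule ccontr)
    assume "\<not> (g \<in> ?Q \<or> h \<in> ?Q)"
    then have "proj g * proj h \<noteq> 0"
      using proj_nonzero mpoly_mult_neq_zero by blast
    have "proj g * proj h = g * h - proj g * (h - proj h) - h * (g - proj g)"
      by (simp add: algebra_simps)
    also have "\<dots> \<in> ?Q"
      using that ideal_mult_left[OF is_ideal_var_ideal rest_in]
      by (intro ideal_diff is_ideal_var_ideal)
    finally have "Poly_Mapping.keys (proj g * proj h) = {}"
      using keys_proj_mult unfolding var_ideal_def by fastforce
    with \<open>proj g * proj h \<noteq> 0\<close> show False by simp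
  qed
  moreover have "1 \<notin> ?Q"
    using assms unfolding var_ideal_def by simp
  ultimately show ?thesis
    unfolding prime_ideal_def using is_ideal_var_ideal by blast
qed

section \<open>Squarefree monomials and the cover ideal\<close>

definition monomial_of_set :: "'v set \<Rightarrow> 'v \<Rightarrow>\<^sub>0 nat" where
  "monomial_of_set C = (\<Sum>v\<in>C. Poly_Mapping.single v 1)"

lemma lookup_monomial_of_set:
  "finite C \<Longrightarrow> Poly_Mapping.lookup (monomial_of_set C) v = (if v \<in> C then 1 else 0)"
  unfolding monomial_of_set_def by (simp add: lookup_sum lookup_single when_def)

lemma prod_var_eq_single_monomial_of_set:
  "finite C \<Longrightarrow> (\<Prod>v\<in>C. var v) = (Poly_Mapping.single (monomial_of_set C) 1 :: ('v, 'k::comm_ring_1) mpoly)"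
  by (induction C rule: finite_induct) (simp_all add: monomial_of_set_def var_def mult_single)

lemma monomial_of_set_dvd_iff:
  fixes m :: "'v::finite \<Rightarrow>\<^sub>0 nat"
  shows "(\<exists>d. m = d + monomial_of_set C) \<longleftrightarrow> (\<forall>v\<in>C. 0 < Poly_Mapping.lookup m v)"
proof
  assume "\<forall>v\<in>C. 0 < Poly_Mapping.lookup m v"
  then have "m = (m - monomial_of_set C) + monomial_of_set C"
    by (intro poly_mapping_eqI) (simp add: lookup_add lookup_minus lookup_monomial_of_set)
  then show "\<exists>d. m = d + monomial_of_set C" ..
qed (auto simp: lookup_add lookup_monomial_of_set)

lemma mon_deg_eq_sum_UNIV: "mon_deg (m :: 'v::finite \<Rightarrow>\<^sub>0 nat) = (\<Sum>v\<in>UNIV. Poly_Mapping.lookup m v)"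
  unfolding mon_deg_def by (rule sum.mono_neutral_left) (auto simp: in_keys_iff)

lemma mon_deg_add: "mon_deg ((x :: 'v::finite \<Rightarrow>\<^sub>0 nat) + y) = mon_deg x + mon_deg y"
  by (simp add: mon_deg_eq_sum_UNIV lookup_add sum.distrib)

lemma mon_deg_single_one: "mon_deg (Poly_Mapping.single (v :: 'v::finite) (1::nat)) = 1"
  by (simp add: mon_deg_eq_sum_UNIV lookup_single when_def)

lemma mon_deg_monomial_of_set: "mon_deg (monomial_of_set (C :: 'v::finite set)) = card C"
  by (simp add: mon_deg_eq_sum_UNIV lookup_monomial_of_set sum.If_cases)

lemma mon_deg_eq_0_iff: "mon_deg m = 0 \<longleftrightarrow> m = 0"
  unfolding mon_deg_def by (auto simp: in_keys_iff intro: poly_mapping_eqI)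

lemma card_le_mon_deg:
  fixes m :: "'v::finite \<Rightarrow>\<^sub>0 nat"
  assumes "\<forall>v\<in>C. 0 < Poly_Mapping.lookup m v"
  shows "card C \<le> mon_deg m"
  using assms monomial_of_set_dvd_iff[of m C] by (auto simp: mon_deg_add mon_deg_monomial_of_set)

lemma eq_monomial_of_set_if_mon_deg_le:
  fixes m :: "'v::finite \<Rightarrow>\<^sub>0 nat"
  assumes "\<forall>v\<in>C. 0 < Poly_Mapping.lookup m v" "mon_deg m \<le> card C"
  shows "m = monomial_of_set C"
proof -
  obtain d where "m = d + monomial_of_set C"
    using assms(1) monomial_of_set_dvd_iff by blast
  moreover from this have "mon_deg d = 0"
    using assms(2) by (simp add: mon_deg_add mon_deg_monomial_of_set)
  ultimately show ?thesis
    by (simp add: mon_deg_eq_0_iff)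
qed

lemma mem_ideal_gen_monomials_iff:
  fixes g :: "'m::comm_monoid_add \<Rightarrow>\<^sub>0 'k::comm_ring_1"
  shows "g \<in> ideal_gen ((\<lambda>\<mu>. Poly_Mapping.single \<mu> 1) ` M)
    \<longleftrightarrow> (\<forall>m\<in>Poly_Mapping.keys g. \<exists>\<mu>\<in>M. \<exists>d. m = d + \<mu>)"
    (is "_ \<longleftrightarrow> ?P g")
proof
  let ?J = "{g :: 'm \<Rightarrow>\<^sub>0 'k. ?P g}"
  have "ideal_gen ((\<lambda>\<mu>. Poly_Mapping.single \<mu> 1) ` M) \<subseteq> ?J"
  proof (rule ideal_gen_least)
    show "is_ideal ?J"
      by (rule is_ideal_monomial_closed) (metis add.assoc)
    show "(\<lambda>\<mu>. Poly_Mapping.single \<mu> 1) ` M \<subseteq> ?J"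
    proof (rule image_subsetI)
      fix \<mu> assume "\<mu> \<in> M"
      then have "\<exists>\<mu>'\<in>M. \<exists>d. \<mu> = d + \<mu>'"
        by (metis add_0)
      then show "Poly_Mapping.single \<mu> 1 \<in> ?J" by simp
    qed
  qed
  then show "g \<in> ideal_gen ((\<lambda>\<mu>. Poly_Mapping.single \<mu> 1) ` M) \<Longrightarrow> ?P g" by blast
next
  assume g: "?P g"
  let ?I = "ideal_gen ((\<lambda>\<mu>. Poly_Mapping.single \<mu> (1::'k)) ` M)"
  have terms: "Poly_Mapping.single m (Poly_Mapping.lookup g m) \<in> ?I" if m: "m \<in> Poly_Mapping.keys g" for m
  proof -
    obtain \<mu> d where "\<mu> \<in> M" "m = d + \<mu>"
      using g m by blast
    then have "Poly_Mapping.single m (Poly_Mapping.lookup g m)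
        = Poly_Mapping.single \<mu> 1 * Poly_Mapping.single d (Poly_Mapping.lookup g m)"
      by (simp add: mult_single add.commute)
    moreover have "Poly_Mapping.single \<mu> 1 \<in> ?I"
      using \<open>\<mu> \<in> M\<close> by (intro subsetD[OF ideal_gen_superset] imageI)
    ultimately show ?thesis
      using is_ideal_ideal_gen ideal_mult_right by metis
  qed
  have "(\<Sum>m\<in>Poly_Mapping.keys g. Poly_Mapping.single m (Poly_Mapping.lookup g m)) \<in> ?I"
    by (rule ideal_sum[OF is_ideal_ideal_gen finite_keys terms])
  then show "g \<in> ?I"
    by (simp flip: poly_mapping_sum_single_lookup)
qed

lemma cover_ideal_eq_ideal_gen_monomials:
  "(cover_ideal E :: ('v::finite, 'k::field) mpoly set)
    = ideal_gen ((\<lambda>\<mu>. Poly_Mapping.single \<mu> 1) ` monomial_of_set ` {C. min_vertex_cover E C})"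
proof -
  have "{(\<Prod>v\<in>C. var v) :: ('v, 'k) mpoly | C. min_vertex_cover E C}
      = (\<lambda>\<mu>. Poly_Mapping.single \<mu> 1) ` monomial_of_set ` {C. min_vertex_cover E C}"
    by (auto simp: prod_var_eq_single_monomial_of_set)
  then show ?thesis
    unfolding cover_ideal_def by simp
qed

lemma mem_cover_ideal_iff:
  "(g \<in> (cover_ideal E :: ('v::finite, 'k::field) mpoly set))
    \<longleftrightarrow> (\<forall>m\<in>Poly_Mapping.keys g. \<exists>C. min_vertex_cover E C \<and> (\<forall>v\<in>C. 0 < Poly_Mapping.lookup m v))"
proof -
  have "(\<exists>\<mu>\<in>monomial_of_set ` {C. min_vertex_cover E C}. \<exists>d. m = d + \<mu>)
      \<longleftrightarrow> (\<exists>C. min_vertex_cover E C \<and> (\<exists>d. m = d + monomial_of_set C))" for m :: "'v \<Rightarrow>\<^sub>0 nat"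
    by blast
  then show ?thesis
    unfolding cover_ideal_eq_ideal_gen_monomials mem_ideal_gen_monomials_iff monomial_of_set_dvd_iff
    by presburger
qed

lemma is_ideal_cover_ideal: "is_ideal (cover_ideal E)"
  unfolding cover_ideal_def by (rule is_ideal_ideal_gen)

lemma var_in_colon_cover_ideal:
  fixes f :: "('v::finite, 'k::field) mpoly"
  assumes "prime_ideal (colon_ideal (cover_ideal E) f)" "min_vertex_cover E C"
  shows "\<exists>j\<in>C. var j * f \<in> cover_ideal E"
proof -
  have "(\<Prod>v\<in>C. var v) \<in> (cover_ideal E :: ('v, 'k) mpoly set)"
    unfolding cover_ideal_def using assms(2) by (intro subsetD[OF ideal_gen_superset]) blast
  then have "(\<Prod>v\<in>C. var v) \<in> colon_ideal (cover_ideal E) f"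
    using ideal_subset_colon_ideal[OF is_ideal_cover_ideal] by blast
  then obtain j where "j \<in> C" "var j \<in> colon_ideal (cover_ideal E) f"
    using prime_ideal_prod[OF assms(1) finite] by blast
  then show ?thesis
    unfolding colon_ideal_def by auto
qed

section \<open>Homogeneous complete multipartite graphs\<close>

lemma card_Compl_of_finite: "card (- (A :: 'a::finite set)) = card (UNIV :: 'a set) - card A"
  by (metis Compl_eq_Diff_UNIV card_Diff_subset finite subset_UNIV)

locale homog_multipartite =
  fixes E :: "'v::finite set set" and k p :: nat and part :: "'v \<Rightarrow> nat"
  assumes two_le_k: "2 \<le> k" and part_less: "\<And>v. part v < k"
    and card_part: "\<And>i. i < k \<Longrightarrow> card {v. part v = i} = p"
    and edges: "E = {{u, v} | u v. part u \<noteq> part v}"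
begin

lemma one_le_p: "1 \<le> p"
proof -
  obtain w :: 'v where True by blast
  have "0 < card {v. part v = part w}"
    by (auto simp: card_gt_0_iff)
  then show ?thesis
    using card_part[OF part_less] by simp
qed

lemma part_nonempty:
  assumes "i < k"
  shows "\<exists>v. part v = i"
proof -
  have "{v. part v = i} \<noteq> {}"
    using card_part[OF assms] one_le_p by (metis card.empty not_one_le_zero)
  then show ?thesis by blast
qed

lemma card_part_complement: "i < k \<Longrightarrow> card {v. part v \<noteq> i} = card (UNIV :: 'v set) - p"
  using card_part[of i] card_Compl_of_finite[of "{v. part v = i}"] by (simp add: Compl_eq)

lemma p_less_card_UNIV: "p < card (UNIV :: 'v set)"
proof -
  obtain w where "part w = 1"
    using part_nonempty[of 1] two_le_k by auto
  then have "w \<in> {v. part v \<noteq> 0}" by simp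
  then have "0 < card {v. part v \<noteq> 0}"
    using card_gt_0_iff finite by blast
  then show ?thesis
    using card_part_complement[of 0] two_le_k by simp
qed

lemma vertex_cover_iff: "vertex_cover E C \<longleftrightarrow> (\<forall>u v. part u \<noteq> part v \<longrightarrow> u \<in> C \<or> v \<in> C)"
proof
  assume cover: "vertex_cover E C"
  show "\<forall>u v. part u \<noteq> part v \<longrightarrow> u \<in> C \<or> v \<in> C"
  proof (intro allI impI)
    fix u v assume "part u \<noteq> part v"
    then have "{u, v} \<in> E"
      unfolding edges by blast
    then have "{u, v} \<inter> C \<noteq> {}"
      using cover unfolding vertex_cover_def by blast
    then show "u \<in> C \<or> v \<in> C" by blast
  qed
next
  assume cover: "\<forall>u v. part u \<noteq> part v \<longrightarrow> u \<in> C \<or> v \<in> C"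
  show "vertex_cover E C"
    unfolding vertex_cover_def edges
  proof
    fix e assume "e \<in> {{u, v} |u v. part u \<noteq> part v}"
    then obtain u v where "e = {u, v}" "part u \<noteq> part v" by blast
    then show "e \<inter> C \<noteq> {}"
      using cover by blast
  qed
qed

lemma vertex_cover_part_complement: "vertex_cover E {v. part v \<noteq> i}"
  unfolding vertex_cover_iff by auto

lemma min_vertex_cover_iff: "min_vertex_cover E C \<longleftrightarrow> (\<exists>i<k. C = {v. part v \<noteq> i})"
proof
  assume min: "min_vertex_cover E C"
  obtain w where "part w = 0"
    using part_nonempty[of 0] two_le_k by auto
  then have "C \<noteq> UNIV"
    using min vertex_cover_part_complement[of 0] unfolding min_vertex_cover_def by blast
  then obtain w where "w \<notin> C" by blast
  then have "{v. part v \<noteq> part w} \<subseteq> C"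
    using min unfolding min_vertex_cover_def vertex_cover_iff by blast
  then have "C = {v. part v \<noteq> part w}"
    using min vertex_cover_part_complement unfolding min_vertex_cover_def by blast
  then show "\<exists>i<k. C = {v. part v \<noteq> i}"
    using part_less by blast
next
  assume "\<exists>i<k. C = {v. part v \<noteq> i}"
  then obtain i where "i < k" and C: "C = {v. part v \<noteq> i}" by blast
  then obtain y where "part y = i"
    using part_nonempty by blast
  have "\<not> vertex_cover E D" if "D \<subset> C" for D
  proof
    assume "vertex_cover E D"
    obtain x where "x \<in> C" "x \<notin> D"
      using \<open>D \<subset> C\<close> by blast
    moreover have "y \<notin> D"
      using \<open>part y = i\<close> \<open>D \<subset> C\<close> C by blast
    ultimately show False
      using \<open>vertex_cover E D\<close> \<open>part y = i\<close> C unfolding vertex_cover_iff by blast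
  qed
  moreover have "vertex_cover E C"
    unfolding C by (rule vertex_cover_part_complement)
  ultimately show "min_vertex_cover E C"
    unfolding min_vertex_cover_def by blast
qed

lemma min_vertex_cover_part_complement: "i < k \<Longrightarrow> min_vertex_cover E {v. part v \<noteq> i}"
  unfolding min_vertex_cover_iff by blast

lemma alpha0_eq: "alpha0 E = card (UNIV :: 'v set) - p"
  unfolding alpha0_def
proof (rule Least_equality)
  show "\<exists>C. vertex_cover E C \<and> card C = card (UNIV :: 'v set) - p"
  proof (intro exI conjI)
    show "vertex_cover E {v. part v \<noteq> 0}"
      by (rule vertex_cover_part_complement)
    show "card {v. part v \<noteq> 0} = card (UNIV :: 'v set) - p"
      using card_part_complement[of 0] two_le_k by simp
  qed
next
  fix n
  assume "\<exists>C. vertex_cover E C \<and> card C = n"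
  then obtain C where "vertex_cover E C" "card C = n" by blast
  show "card (UNIV :: 'v set) - p \<le> n"
  proof (cases "C = UNIV")
    case False
    then obtain w where "w \<notin> C" by blast
    then have "- C \<subseteq> {v. part v = part w}"
      using \<open>vertex_cover E C\<close> unfolding vertex_cover_iff by blast
    then have "card (- C) \<le> p"
      using card_part[OF part_less] card_mono[OF finite] by metis
    then show ?thesis
      using card_Compl_of_finite[of C] \<open>card C = n\<close> by simp
  qed (use \<open>card C = n\<close> in simp)
qed

lemma cover_graph_complete_iff: "cover_graph_complete E \<longleftrightarrow> p = 1"
proof
  assume complete: "cover_graph_complete E"
  have cover0: "min_vertex_cover E {v. part v \<noteq> 0}"
    by (rule min_vertex_cover_part_complement) (use two_le_k in simp)
  have cover1: "min_vertex_cover E {v. part v \<noteq> 1}"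
    by (rule min_vertex_cover_part_complement) (use two_le_k in simp)
  obtain w where "part w = 0"
    using part_nonempty[of 0] two_le_k by auto
  then have "w \<notin> {v. part v \<noteq> 0}" "w \<in> {v. part v \<noteq> 1}" by auto
  then have "{v. part v \<noteq> 0} \<noteq> {v. part v \<noteq> 1}" by blast
  then have "card ({v. part v \<noteq> 0} \<union> {v. part v \<noteq> 1}) = card {v. part v \<noteq> 0} + 1"
    using complete[unfolded cover_graph_complete_def, rule_format] cover0 cover1 by blast
  moreover have "{v. part v \<noteq> 0} \<union> {v. part v \<noteq> 1} = UNIV" by auto
  ultimately have "card (UNIV :: 'v set) = card (UNIV :: 'v set) - p + 1"
    using card_part_complement[of 0] two_le_k by simp
  then show "p = 1"
    using one_le_p p_less_card_UNIV by simp
next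
  assume "p = 1"
  show "cover_graph_complete E"
    unfolding cover_graph_complete_def min_vertex_cover_iff
  proof (intro allI impI, elim conjE exE)
    fix C1 C2 i j
    assume "C1 \<noteq> C2" "i < k" "C1 = {v. part v \<noteq> i}" "C2 = {v. part v \<noteq> j}"
    then have "i \<noteq> j" by blast
    with \<open>C1 = _\<close> \<open>C2 = _\<close> have "C1 \<union> C2 = UNIV" by auto
    moreover have "card C1 = card (UNIV :: 'v set) - 1"
      using card_part_complement[OF \<open>i < k\<close>] \<open>C1 = _\<close> \<open>p = 1\<close> by simp
    ultimately show "card (C1 \<union> C2) = card C1 + 1"
      using p_less_card_UNIV \<open>p = 1\<close> by simp
  qed
qed

lemma complete_graph_iff: "complete_graph E \<longleftrightarrow> p = 1"
proof
  assume complete: "complete_graph E"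
  have "card {v. part v = part u} \<le> 1" for u
  proof -
    have "x = y" if "part x = part u" "part y = part u" for x y
    proof (rule ccontr)
      assume "x \<noteq> y"
      then have "{x, y} \<in> E"
        using complete unfolding complete_graph_def by blast
      with that show False
        unfolding edges by (auto simp: doubleton_eq_iff)
    qed
    then show ?thesis
      using card_le_Suc0_iff_eq[OF finite] by (metis (mono_tags, lifting) One_nat_def mem_Collect_eq)
  qed
  then show "p = 1"
    using card_part[OF part_less] one_le_p by (metis le_antisym)
next
  assume "p = 1"
  have "part u \<noteq> part v" if "u \<noteq> v" for u v
  proof
    assume "part u = part v"
    then have "{u, v} \<subseteq> {w. part w = part u}" by auto
    then have "card {u, v} \<le> 1"
      using card_part[OF part_less] \<open>p = 1\<close> card_mono[OF finite] by metis
    with \<open>u \<noteq> v\<close> show False by simp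
  qed
  then show "complete_graph E"
    unfolding complete_graph_def edges by blast
qed


definition covers_part_complement :: "('v \<Rightarrow>\<^sub>0 nat) \<Rightarrow> bool" where
  "covers_part_complement m \<longleftrightarrow> (\<exists>i<k. \<forall>v. part v \<noteq> i \<longrightarrow> 0 < Poly_Mapping.lookup m v)"

lemma mem_cover_ideal_iff_covers_part_complement:
  "(g \<in> (cover_ideal E :: ('v, 'k::field) mpoly set))
    \<longleftrightarrow> (\<forall>m\<in>Poly_Mapping.keys g. covers_part_complement m)"
proof -
  have "(\<exists>C. min_vertex_cover E C \<and> (\<forall>v\<in>C. Q v)) \<longleftrightarrow> (\<exists>i<k. \<forall>v. part v \<noteq> i \<longrightarrow> Q v)" for Q
    unfolding min_vertex_cover_iff by auto
  then show ?thesis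
    unfolding mem_cover_ideal_iff covers_part_complement_def by presburger
qed

lemma covers_part_complement_shift_iff:
  assumes "part a \<noteq> part b"
  shows "covers_part_complement (monomial_of_set (- {a, b}) + m)
    \<longleftrightarrow> 0 < Poly_Mapping.lookup m a \<or> 0 < Poly_Mapping.lookup m b"
proof
  let ?\<mu> = "monomial_of_set (- {a, b})"
  assume "covers_part_complement (?\<mu> + m)"
  then obtain i where i: "\<forall>v. part v \<noteq> i \<longrightarrow> 0 < Poly_Mapping.lookup (?\<mu> + m) v"
    unfolding covers_part_complement_def by blast
  have "Poly_Mapping.lookup ?\<mu> a = 0" "Poly_Mapping.lookup ?\<mu> b = 0"
    by (simp_all add: lookup_monomial_of_set)
  with i assms show "0 < Poly_Mapping.lookup m a \<or> 0 < Poly_Mapping.lookup m b"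
    by (metis add_0 lookup_add)
next
  let ?\<mu> = "monomial_of_set (- {a, b})"
  have covers: "\<forall>v. part v \<noteq> part y \<longrightarrow> 0 < Poly_Mapping.lookup (?\<mu> + m) v"
    if "0 < Poly_Mapping.lookup m x" "{x, y} = {a, b}" for x y
  proof (intro allI impI)
    fix v assume "part v \<noteq> part y"
    then have "v \<noteq> y" by auto
    show "0 < Poly_Mapping.lookup (?\<mu> + m) v"
    proof (cases "v = x")
      case False
      with \<open>v \<noteq> y\<close> \<open>{x, y} = {a, b}\<close> have "v \<in> - {a, b}" by auto
      then show ?thesis by (simp add: lookup_add lookup_monomial_of_set)
    qed (use that in \<open>simp add: lookup_add\<close>)
  qed
  assume "0 < Poly_Mapping.lookup m a \<or> 0 < Poly_Mapping.lookup m b"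
  then show "covers_part_complement (?\<mu> + m)"
    unfolding covers_part_complement_def using covers[of a b] covers[of b a] part_less
    by (metis insert_commute)
qed

lemma colon_cover_ideal_eq_var_ideal:
  assumes "part a \<noteq> part b"
  shows "colon_ideal (cover_ideal E) (Poly_Mapping.single (monomial_of_set (- {a, b})) 1)
    = (var_ideal {a, b} :: ('v, 'k::field) mpoly set)"
proof (rule set_eqI)
  fix g :: "('v, 'k) mpoly"
  let ?\<mu> = "monomial_of_set (- {a, b})"
  have "g \<in> colon_ideal (cover_ideal E) (Poly_Mapping.single ?\<mu> 1)
      \<longleftrightarrow> Poly_Mapping.single ?\<mu> 1 * g \<in> cover_ideal E"
    by (simp add: colon_ideal_def mult.commute)
  also have "\<dots> \<longleftrightarrow> (\<forall>m\<in>Poly_Mapping.keys g. covers_part_complement (?\<mu> + m))"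
    unfolding mem_cover_ideal_iff_covers_part_complement keys_single_one_mult by blast
  also have "\<dots> \<longleftrightarrow> g \<in> var_ideal {a, b}"
    unfolding covers_part_complement_shift_iff[OF assms] var_ideal_def by simp
  finally show "g \<in> colon_ideal (cover_ideal E) (Poly_Mapping.single ?\<mu> 1) \<longleftrightarrow> g \<in> var_ideal {a, b}" .
qed

lemma exists_prime_colon_cover_ideal:
  "\<exists>f\<in>homog_of_deg (card (UNIV :: 'v set) - 2).
     prime_ideal (colon_ideal (cover_ideal E :: ('v, 'k::field) mpoly set) f)"
proof -
  obtain a b where "part a = 0" "part b = 1"
    using part_nonempty[of 0] part_nonempty[of 1] two_le_k by auto
  then have "part a \<noteq> part b" "a \<noteq> b" by auto
  let ?f = "Poly_Mapping.single (monomial_of_set (- {a, b})) 1 :: ('v, 'k) mpoly"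
  have "mon_deg (monomial_of_set (- {a, b})) = card (UNIV :: 'v set) - 2"
    using \<open>a \<noteq> b\<close> by (simp add: mon_deg_monomial_of_set card_Compl_of_finite)
  then have "?f \<in> homog_of_deg (card (UNIV :: 'v set) - 2)"
    unfolding homog_of_deg_def by simp
  moreover have "prime_ideal (colon_ideal (cover_ideal E) ?f)"
    unfolding colon_cover_ideal_eq_var_ideal[OF \<open>part a \<noteq> part b\<close>] by (rule prime_ideal_var_ideal) simp
  ultimately show ?thesis
    by blast
qed

lemma covers_part_complement_var_mult:
  fixes f :: "('v, 'k::field) mpoly"
  assumes "var j * f \<in> cover_ideal E" "u \<in> Poly_Mapping.keys f"
  shows "covers_part_complement (Poly_Mapping.single j 1 + u)"
proof -
  have "Poly_Mapping.single j 1 + u \<in> Poly_Mapping.keys (var j * f)"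
    using assms(2) unfolding var_def keys_single_one_mult by blast
  then show ?thesis
    using assms(1) unfolding mem_cover_ideal_iff_covers_part_complement by blast
qed

lemma part_complements_not_one_var_apart:
  assumes "2 \<le> p" "part j \<noteq> part j'"
    and "Poly_Mapping.single j 1 + u = monomial_of_set {v. part v \<noteq> i}"
    and "Poly_Mapping.single j' 1 + u = monomial_of_set {v. part v \<noteq> i'}"
  shows False
proof -
  have eq: "(if j = v then 1 else 0) + Poly_Mapping.lookup u v = (if v \<in> {v. part v \<noteq> i} then 1 else 0)"
    for v
    using arg_cong[OF assms(3), of "\<lambda>m. Poly_Mapping.lookup m v"]
    by (simp only: lookup_add lookup_single lookup_monomial_of_set[OF finite] when_def)
  have eq': "(if j' = v then 1 else 0) + Poly_Mapping.lookup u v = (if v \<in> {v. part v \<noteq> i'} then 1 else 0)"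
    for v
    using arg_cong[OF assms(4), of "\<lambda>m. Poly_Mapping.lookup m v"]
    by (simp only: lookup_add lookup_single lookup_monomial_of_set[OF finite] when_def)
  have "j \<noteq> j'"
    using assms(2) by auto
  have "Poly_Mapping.lookup u j = 0" "Poly_Mapping.lookup u j' = 0"
    using eq[of j] eq'[of j'] by (auto split: if_splits)
  then have "part j = i'" "part j' = i"
    using eq'[of j] eq[of j'] \<open>j \<noteq> j'\<close> by (auto split: if_splits)
  have "\<not> (\<forall>x\<in>{v. part v = part j'}. x = j')"
  proof
    assume "\<forall>x\<in>{v. part v = part j'}. x = j'"
    then have "{v. part v = part j'} \<subseteq> {j'}" by blast
    then have "card {v. part v = part j'} \<le> 1"
      using card_mono[of "{j'}"] by simp
    then show False
      using card_part[OF part_less] assms(1) by simp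
  qed
  then obtain x where "part x = part j'" "x \<noteq> j'" by blast
  then have "x \<noteq> j"
    using assms(2) by auto
  then have "Poly_Mapping.lookup u x = 0"
    using eq[of x] \<open>part x = part j'\<close> \<open>part j' = i\<close> by simp
  then show False
    using eq'[of x] \<open>x \<noteq> j'\<close> \<open>part x = part j'\<close> \<open>part j' = i\<close> \<open>part j = i'\<close> assms(2) by simp
qed

lemma degree_of_prime_colon_cover_ideal:
  fixes f :: "('v, 'k::field) mpoly"
  assumes "f \<in> homog_of_deg d" "prime_ideal (colon_ideal (cover_ideal E) f)"
  shows "card (UNIV :: 'v set) - p \<le> d + 1"
    and "2 \<le> p \<Longrightarrow> d + 1 \<noteq> card (UNIV :: 'v set) - p"
proof -
  have "f \<noteq> 0"
    using nonzero_if_prime_colon_ideal[OF is_ideal_cover_ideal assms(2)] .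
  then obtain u where u: "u \<in> Poly_Mapping.keys f"
    by (metis equals0I keys_eq_empty)
  then have "mon_deg u = d"
    using assms(1) unfolding homog_of_deg_def by blast
  then have deg: "mon_deg (Poly_Mapping.single j 1 + u) = d + 1" for j
    unfolding mon_deg_add mon_deg_single_one by simp
  have tight: "Poly_Mapping.single j 1 + u = monomial_of_set {v. part v \<noteq> i}"
    if "i < k" "\<forall>v\<in>{v. part v \<noteq> i}. 0 < Poly_Mapping.lookup (Poly_Mapping.single j 1 + u) v"
      "d + 1 = card (UNIV :: 'v set) - p" for i j
  proof (rule eq_monomial_of_set_if_mon_deg_le[OF that(2)])
    show "mon_deg (Poly_Mapping.single j 1 + u) \<le> card {v. part v \<noteq> i}"
      using deg card_part_complement[OF that(1)] that(3) by simp
  qed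
  have "min_vertex_cover E {v. part v \<noteq> 0}"
    by (rule min_vertex_cover_part_complement) (use two_le_k in simp)
  then obtain j where j: "var j * f \<in> cover_ideal E"
    using var_in_colon_cover_ideal[OF assms(2)] by blast
  obtain i where i: "i < k" "\<forall>v\<in>{v. part v \<noteq> i}. 0 < Poly_Mapping.lookup (Poly_Mapping.single j 1 + u) v"
    using covers_part_complement_var_mult[OF j u] unfolding covers_part_complement_def by auto
  show "card (UNIV :: 'v set) - p \<le> d + 1"
    using card_le_mon_deg[OF i(2)] deg card_part_complement[OF i(1)] by simp
  show "d + 1 \<noteq> card (UNIV :: 'v set) - p" if "2 \<le> p"
  proof
    assume d: "d + 1 = card (UNIV :: 'v set) - p"
    obtain j' where "j' \<in> {v. part v \<noteq> part j}" and j': "var j' * f \<in> cover_ideal E"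
      using var_in_colon_cover_ideal[OF assms(2) min_vertex_cover_part_complement[OF part_less]] by blast
    then have "part j \<noteq> part j'" by simp
    obtain i' where i': "i' < k" "\<forall>v\<in>{v. part v \<noteq> i'}. 0 < Poly_Mapping.lookup (Poly_Mapping.single j' 1 + u) v"
      using covers_part_complement_var_mult[OF j' u] unfolding covers_part_complement_def by auto
    show False
      by (rule part_complements_not_one_var_apart[OF that \<open>part j \<noteq> part j'\<close> tight[OF i d] tight[OF i' d]])
  qed
qed

lemma v_number_cover_ideal_eq_alpha0_minus_one_iff:
  "v_number (cover_ideal E :: ('v, 'k::field) mpoly set) = alpha0 E - 1 \<longleftrightarrow> p = 1"
proof -
  let ?v = "v_number (cover_ideal E :: ('v, 'k) mpoly set)"
  obtain f :: "('v, 'k) mpoly" where f: "f \<in> homog_of_deg (card (UNIV :: 'v set) - 2)"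
    "prime_ideal (colon_ideal (cover_ideal E) f)"
    using exists_prime_colon_cover_ideal by blast
  then have upper: "?v \<le> card (UNIV :: 'v set) - 2"
    by (rule v_number_le)
  have "\<exists>g\<in>homog_of_deg ?v. prime_ideal (colon_ideal (cover_ideal E :: ('v, 'k) mpoly set) g)"
    using f by (rule v_number_attained)
  then obtain g :: "('v, 'k) mpoly" where "g \<in> homog_of_deg ?v" "prime_ideal (colon_ideal (cover_ideal E) g)"
    by blast
  note lower = degree_of_prime_colon_cover_ideal(1)[OF this]
    and not_tight = degree_of_prime_colon_cover_ideal(2)[OF this]
  show ?thesis
  proof (cases "p = 1")
    case True
    then show ?thesis
      using lower upper alpha0_eq p_less_card_UNIV by simp
  next
    case False
    then show ?thesis
      using not_tight one_le_p alpha0_eq p_less_card_UNIV by simp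
  qed
qed

end

theorem corollary3p15:
  fixes E :: "'v::finite set set" and k p :: nat
  assumes "homog_complete_multipartite E k p"
  shows "(cover_graph_complete E \<longleftrightarrow> complete_graph E) \<and>
         (complete_graph E \<longleftrightarrow>
            v_number (cover_ideal E :: ('v, 'k::field) mpoly set) = alpha0 E - 1)"
proof -
  from assms obtain part :: "'v \<Rightarrow> nat" where "2 \<le> k" "\<forall>v. part v < k"
    "\<forall>i<k. card {v. part v = i} = p" "E = {{u, v} | u v. part u \<noteq> part v}"
    unfolding homog_complete_multipartite_def by blast
  then interpret homog_multipartite E k p part
    by unfold_locales auto
  have "v_number (cover_ideal E :: ('v, 'k) mpoly set) = alpha0 E - 1 \<longleftrightarrow> p = 1"
    by (rule v_number_cover_ideal_eq_alpha0_minus_one_iff)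
  then show ?thesis
    using cover_graph_complete_iff complete_graph_iff by simp
qed

end
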